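(* Let $P_1$ be the substitution on words over the alphabet $\{\mathtt R,\mathtt r,\mathtt L,\mathtt l,\mathtt S,\mathtt s\}$ given by $\mathtt R\mapsto\mathtt{Rr}$, $\mathtt r\mapsto\mathtt S$, $\mathtt L\mapsto\mathtt S$, $\mathtt l\mapsto\mathtt{Ll}$, $\mathtt S\mapsto\mathtt{Rl}$, $\mathtt s\mapsto\mathtt{Lr}$ (applied letterwise), and let $a_n$ be the number of letters of the word $P_1^n(\mathtt L)$, $n\ge 0$ (this is the length of the right side boundary of the polyomino $\mathcal S_n$ containing the Harter–Heighway dragon curve $\mathcal C_n$). Then $$a_n=a_{n-1}+2a_{n-3}\quad\text{for } n\ge 4,\qquad a_0=1,\ a_1=1,\ a_2=2.$$
   Context: $\mathcal C_n$ is the $n$-th iterate of the Harter–Heighway dragon curve (the turtle path of the word $P^n(A)$ for $P(A)=A+B$, $P(B)=A-B$), and $\mathcal S_n$ is the union of the squares having as a diagonal an edge of $\mathcal C_n$; by earlier work the right side of the boundary of $\mathcal S_n$ is traced self-avoidingly by the word $P_1^n(\mathtt L)$, one letter per boundary edge. *)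

theory Defs
  imports Main
begin

text \<open>Alphabet {R, r, L, l, S, s}; uppercase letters are written with suffix U,
lowercase with suffix l.\<close>
datatype letter = RU | Rl | LU | Ll | SU | Sl

fun P1_letter :: "letter \<Rightarrow> letter list" where
  "P1_letter RU = [RU, Rl]"
| "P1_letter Rl = [SU]"
| "P1_letter LU = [SU]"
| "P1_letter Ll = [LU, Ll]"
| "P1_letter SU = [RU, Ll]"
| "P1_letter Sl = [LU, Rl]"

definition P1 :: "letter list \<Rightarrow> letter list" where
  "P1 w = concat (map P1_letter w)"

definition a :: "nat \<Rightarrow> nat" where
  "a n = length ((P1 ^^ n) [LU])"

end

theory Submission
  imports Defs
begin

text \<open>Since P1 acts letterwise, the length of an iterate of a word is the sum of the lengths of
the iterates of its letters, and these lengths satisfy a linear recursion read off from P1.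
Abbreviating by X n the length of the n-th iterate of the letter X, that recursion gives
S (m+3) = R (m+2) + l (m+2) = (R (m+1) + S m) + (S m + l (m+1)) = S (m+2) + 2 S m,
and a (n+1) = S n because P1 maps L to S.\<close>

lemma P1_Nil [simp]: "P1 [] = []"
  by (simp add: P1_def)

lemma P1_append: "P1 (u @ v) = P1 u @ P1 v"
  by (simp add: P1_def)

lemma P1_singleton [simp]: "P1 [x] = P1_letter x"
  by (simp add: P1_def)

lemma funpow_P1_Nil: "(P1 ^^ n) [] = []"
  by (induction n) simp_all

lemma funpow_P1_append: "(P1 ^^ n) (u @ v) = (P1 ^^ n) u @ (P1 ^^ n) v"
  by (induction n) (simp_all add: P1_append)

definition iterate_length :: "nat \<Rightarrow> letter \<Rightarrow> nat" where
  "iterate_length n x = length ((P1 ^^ n) [x])"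

lemma length_funpow_P1: "length ((P1 ^^ n) w) = (\<Sum>x\<leftarrow>w. iterate_length n x)"
proof (induction w)
  case Nil
  then show ?case by (simp add: funpow_P1_Nil)
next
  case (Cons x w)
  have "(P1 ^^ n) (x # w) = (P1 ^^ n) [x] @ (P1 ^^ n) w"
    using funpow_P1_append[of n "[x]" w] by simp
  with Cons show ?case by (simp add: iterate_length_def)
qed

lemma iterate_length_0 [simp]: "iterate_length 0 x = 1"
  by (simp add: iterate_length_def)

lemma iterate_length_Suc:
  "iterate_length (Suc n) x = (\<Sum>y\<leftarrow>P1_letter x. iterate_length n y)"
proof -
  have "(P1 ^^ Suc n) [x] = (P1 ^^ n) (P1_letter x)"
    by (simp only: funpow_Suc_right comp_def P1_singleton)
  \<comment> \<open>unfolding iterate_length at every index would loop with length_funpow_P1\<close>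
  then show ?thesis
    by (simp only: iterate_length_def[of "Suc n"] length_funpow_P1)
qed

lemma iterate_length_Suc_letter [simp]:
  "iterate_length (Suc n) RU = iterate_length n RU + iterate_length n Rl"
  "iterate_length (Suc n) Rl = iterate_length n SU"
  "iterate_length (Suc n) LU = iterate_length n SU"
  "iterate_length (Suc n) Ll = iterate_length n LU + iterate_length n Ll"
  "iterate_length (Suc n) SU = iterate_length n RU + iterate_length n Ll"
  "iterate_length (Suc n) Sl = iterate_length n LU + iterate_length n Rl"
  by (simp_all add: iterate_length_Suc)

lemma iterate_length_SU_recurrence:
  "iterate_length (m + 3) SU = iterate_length (m + 2) SU + 2 * iterate_length m SU"
  by (simp add: numeral_3_eq_3 numeral_2_eq_2)

lemma a_eq_iterate_length: "a n = iterate_length n LU"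
  by (simp add: a_def iterate_length_def)

lemma a_Suc: "a (Suc n) = iterate_length n SU"
  by (simp add: a_eq_iterate_length)

theorem theorem2:
  shows "(\<forall>n\<ge>4. a n = a (n - 1) + 2 * a (n - 3)) \<and> a 0 = 1 \<and> a 1 = 1 \<and> a 2 = 2"
proof (intro conjI allI impI)
  fix n :: nat
  assume "n \<ge> 4"
  then obtain m where n: "n = Suc (m + 3)"
    using add.commute le_Suc_ex by fastforce
  have "a n = iterate_length (m + 3) SU"
    by (simp only: n a_Suc)
  also have "\<dots> = iterate_length (m + 2) SU + 2 * iterate_length m SU"
    by (rule iterate_length_SU_recurrence)
  also have "\<dots> = a (n - 1) + 2 * a (n - 3)"
  proof -
    have "n - 1 = Suc (m + 2)" and "n - 3 = Suc m"
      using n by simp_all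
    then show ?thesis
      by (simp only: a_Suc)
  qed
  finally show "a n = a (n - 1) + 2 * a (n - 3)" .
qed (simp_all add: a_eq_iterate_length numeral_2_eq_2)

end
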